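(* Let $M=(W,\bm{\Box},V)$ be a reflexive neighborhood model and $\Sigma$ a set of formulas closed under subformulas. Then the transitive filtration $M^{T}_f=(W_f,\bm{\Box}^{T}_f,V_f)$ of $M$ through $\Sigma$ is reflexive: $\bm{\Box}^{T}_fX\subseteq X$ for every $X\subseteq W_f$.
   Context: A neighborhood model is $M=(W,\bm{\Box},V)$ with $W\neq\varnothing$, $\bm{\Box}:\mathcal P(W)\to\mathcal P(W)$, $V:Var\to\mathcal P(W)$; truth sets: $|p|_M=V(p)$, $|\neg\varphi|_M=W\setminus|\varphi|_M$, $|\varphi\wedge\psi|_M=|\varphi|_M\cap|\psi|_M$, $|\Box\varphi|_M=\bm{\Box}|\varphi|_M$. $M$ is reflexive if $\bm{\Box}X\subseteq X$ for all $X\subseteq W$. For $\Sigma$ closed under subformulas, $w\sim v$ iff $w,v$ satisfy the same formulas of $\Sigma$; $\widetilde w$ is the class of $w$, $W_f=\{\widetilde w:w\in W\}$, $\widetilde X=\{\widetilde w:w\in X\}$, $V_f(p)=\widetilde{|p|}_M$. The minimal filtration has $\bm{\Box}^{-}_fX=\widetilde{|\Box\varphi|}_M$ if $X=\widetilde{|\varphi|}_M$ for some formula $\Box\varphi\in\Sigma$, and $\varnothing$ otherwise. For a function $\bm{\Box}':\mathcal P(U)\to\mathcal P(U)$, $\widehat{\bm{\Box}'}X=X$ if $X=\bm{\Box}'Y$ for some $Y\subseteq U$, and $\varnothing$ otherwise. The transitive filtration is $M^{T}_f=(W_f,\bm{\Box}^{T}_f,V_f)$ with $\bm{\Box}^{T}_fX=\bm{\Box}^{-}_fX\cup\widehat{\bm{\Box}^{-}_f}X$.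 *)

theory Defs
  imports Main
begin

datatype 'v form = Var 'v | Neg "'v form" | Conj "'v form" "'v form" | Box "'v form"

definition nbh_model :: "'w set \<Rightarrow> ('w set \<Rightarrow> 'w set) \<Rightarrow> ('v \<Rightarrow> 'w set) \<Rightarrow> bool" where
  "nbh_model W B V \<longleftrightarrow> W \<noteq> {} \<and> (\<forall>X. X \<subseteq> W \<longrightarrow> B X \<subseteq> W) \<and> (\<forall>p. V p \<subseteq> W)"

fun truth :: "'w set \<Rightarrow> ('w set \<Rightarrow> 'w set) \<Rightarrow> ('v \<Rightarrow> 'w set) \<Rightarrow> 'v form \<Rightarrow> 'w set" where
  "truth W B V (Var p) = V p"
| "truth W B V (Neg a) = W - truth W B V a"
| "truth W B V (Conj a b) = truth W B V a \<inter> truth W B V b"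
| "truth W B V (Box a) = B (truth W B V a)"

definition reflexive_model :: "'w set \<Rightarrow> ('w set \<Rightarrow> 'w set) \<Rightarrow> bool" where
  "reflexive_model W B \<longleftrightarrow> (\<forall>X. X \<subseteq> W \<longrightarrow> B X \<subseteq> X)"

fun subformulas :: "'v form \<Rightarrow> 'v form set" where
  "subformulas (Var p) = {Var p}"
| "subformulas (Neg a) = insert (Neg a) (subformulas a)"
| "subformulas (Conj a b) = insert (Conj a b) (subformulas a \<union> subformulas b)"
| "subformulas (Box a) = insert (Box a) (subformulas a)"

definition sub_closed :: "'v form set \<Rightarrow> bool" where
  "sub_closed \<Sigma> \<longleftrightarrow> (\<forall>\<phi>\<in>\<Sigma>. subformulas \<phi> \<subseteq> \<Sigma>)"

definition cls :: "'w set \<Rightarrow> ('w set \<Rightarrow> 'w set) \<Rightarrow> ('v \<Rightarrow> 'w set) \<Rightarrow> 'v form set \<Rightarrow> 'w \<Rightarrow> 'w set" where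
  "cls W B V \<Sigma> w = {v \<in> W. \<forall>\<phi>\<in>\<Sigma>. (w \<in> truth W B V \<phi> \<longleftrightarrow> v \<in> truth W B V \<phi>)}"

definition Wf :: "'w set \<Rightarrow> ('w set \<Rightarrow> 'w set) \<Rightarrow> ('v \<Rightarrow> 'w set) \<Rightarrow> 'v form set \<Rightarrow> 'w set set" where
  "Wf W B V \<Sigma> = cls W B V \<Sigma> ` W"

definition minimal_box :: "'w set \<Rightarrow> ('w set \<Rightarrow> 'w set) \<Rightarrow> ('v \<Rightarrow> 'w set) \<Rightarrow> 'v form set
    \<Rightarrow> 'w set set \<Rightarrow> 'w set set" where
  "minimal_box W B V \<Sigma> X =
     (if \<exists>\<phi>. Box \<phi> \<in> \<Sigma> \<and> X = cls W B V \<Sigma> ` truth W B V \<phi>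
      then cls W B V \<Sigma> ` truth W B V (Box (SOME \<phi>. Box \<phi> \<in> \<Sigma> \<and> X = cls W B V \<Sigma> ` truth W B V \<phi>))
      else {})"

definition hat :: "'u set \<Rightarrow> ('u set \<Rightarrow> 'u set) \<Rightarrow> 'u set \<Rightarrow> 'u set" where
  "hat U B' X = (if \<exists>Y. Y \<subseteq> U \<and> X = B' Y then X else {})"

definition transitive_box :: "'w set \<Rightarrow> ('w set \<Rightarrow> 'w set) \<Rightarrow> ('v \<Rightarrow> 'w set) \<Rightarrow> 'v form set
    \<Rightarrow> 'w set set \<Rightarrow> 'w set set" where
  "transitive_box W B V \<Sigma> X =
     minimal_box W B V \<Sigma> X \<union> hat (Wf W B V \<Sigma>) (minimal_box W B V \<Sigma>) X"

end

theory Submission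
  imports Defs
begin

text \<open>The transitive filtration adds to the minimal one only the operator
\<open>hat\<close>, which maps every set to itself or to the empty set and hence is
deflationary. The minimal filtration sends the class-image of a truth set
\<open>|\<phi>|\<close> to the class-image of \<open>|\<box>\<phi>|\<close>, which is contained in it because
reflexivity gives \<open>|\<box>\<phi>| \<subseteq> |\<phi>|\<close>.\<close>

lemma truth_subset_carrier:
  assumes "nbh_model W B V"
  shows "truth W B V \<phi> \<subseteq> W"
  using assms by (induction \<phi>) (auto simp: nbh_model_def)

lemma hat_subset: "hat U B' X \<subseteq> X"
  by (simp add: hat_def)

lemma minimal_box_subset:
  assumes deflationary: "\<And>\<phi>. B (truth W B V \<phi>) \<subseteq> truth W B V \<phi>"
  shows "minimal_box W B V \<Sigma> X \<subseteq> X"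
proof (cases "\<exists>\<phi>. Box \<phi> \<in> \<Sigma> \<and> X = cls W B V \<Sigma> ` truth W B V \<phi>")
  case True
  define \<psi> where "\<psi> = (SOME \<phi>. Box \<phi> \<in> \<Sigma> \<and> X = cls W B V \<Sigma> ` truth W B V \<phi>)"
  have X_eq: "X = cls W B V \<Sigma> ` truth W B V \<psi>"
    unfolding \<psi>_def using someI_ex[OF True] by blast
  have "minimal_box W B V \<Sigma> X = cls W B V \<Sigma> ` B (truth W B V \<psi>)"
    using True by (simp add: minimal_box_def \<psi>_def)
  also have "\<dots> \<subseteq> X"
    using X_eq deflationary by blast
  finally show ?thesis .
next
  case False
  then show ?thesis
    unfolding minimal_box_def by (simp only: if_not_P) simp
qed

lemma reflexive_model_truth_deflationary:
  assumes "nbh_model W B V" and "reflexive_model W B"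
  shows "B (truth W B V \<phi>) \<subseteq> truth W B V \<phi>"
  using assms(2) truth_subset_carrier[OF assms(1)] unfolding reflexive_model_def by blast

theorem mainTheorem9:
  fixes W :: "'w set" and B :: "'w set \<Rightarrow> 'w set" and V :: "'v \<Rightarrow> 'w set"
    and \<Sigma> :: "'v form set"
  assumes "nbh_model W B V"
    and "reflexive_model W B"
    and "sub_closed \<Sigma>"
  shows "\<forall>X. X \<subseteq> Wf W B V \<Sigma> \<longrightarrow> transitive_box W B V \<Sigma> X \<subseteq> X"
proof (intro allI impI)
  fix X
  have "minimal_box W B V \<Sigma> X \<subseteq> X"
    using minimal_box_subset reflexive_model_truth_deflationary[OF assms(1,2)] by blast
  then show "transitive_box W B V \<Sigma> X \<subseteq> X"
    by (simp add: transitive_box_def hat_subset)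
qed

end
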